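(* For every integer $r \ge 2$ there exists $N = N(r)$ such that for all integers $n \ge N$, \[ \hat{R}(P_n, r) < 600 (\log r)\, r^2 n . \]
   Context: $P_n$ denotes the path on $n$ vertices. For a graph $F$ and an integer $r\ge 1$, write $G \to (F)_r$ if every colouring of the edges of $G$ with $r$ colours yields a monochromatic copy of $F$ (i.e. a subgraph isomorphic to $F$ all of whose edges have the same colour). The size-Ramsey number $\hat{R}(F,r)$ is the minimum number of edges $|E(G)|$ over all graphs $G$ with $G \to (F)_r$. $\log$ denotes the natural logarithm. *)

theory Defs
  imports Complex_Main
begin

text \<open>A finite simple graph is represented by its edge set: a finite set of
  2-element subsets of the vertex type nat (every finite graph is isomorphic
  to one on natural-number vertices; isolated vertices are irrelevant here).\<close>
definition simple_graph :: "nat set set \<Rightarrow> bool" where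
  "simple_graph E \<longleftrightarrow> finite E \<and> (\<forall>e\<in>E. card e = 2)"

definition mono_path :: "nat set set \<Rightarrow> (nat set \<Rightarrow> nat) \<Rightarrow> nat \<Rightarrow> bool" where
  "mono_path E c n \<longleftrightarrow>
     (\<exists>v :: nat \<Rightarrow> nat. \<exists>col :: nat. inj_on v {..<n} \<and>
        (\<forall>i. Suc i < n \<longrightarrow> {v i, v (Suc i)} \<in> E \<and> c {v i, v (Suc i)} = col))"

definition arrows_path :: "nat set set \<Rightarrow> nat \<Rightarrow> nat \<Rightarrow> bool" where
  "arrows_path E n r \<longleftrightarrow>
     (\<forall>c :: nat set \<Rightarrow> nat. (\<forall>e\<in>E. c e < r) \<longrightarrow> mono_path E c n)"

definition size_ramsey_path :: "nat \<Rightarrow> nat \<Rightarrow> nat" where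
  "size_ramsey_path n r =
     (LEAST m. \<exists>E. simple_graph E \<and> arrows_path E n r \<and> card E = m)"

end

theory Submission
  imports Defs "HOL-Analysis.Complex_Transcendental" "HOL-Analysis.Harmonic_Numbers"
begin

text \<open>Let G have N = 30rn vertices and M edges such that every set of at most 2n vertices
  spans at most D \<approx> \<lambda> n edges, where \<lambda> = O(log r); counting the M-edge graphs
  that contain t = D + 1 edges inside some 2n-set shows that such G exists as long as
  M \<approx> 30 r^2 D. If a colour class H contains no path on n vertices, depth-first search
  in H finds n vertices S whose H-neighbours outside S lie on the current search path, which
  has fewer than n vertices; all edges of H at S then lie in a set of fewer than 2n vertices.
  Removing S and repeating shows that H has at most (N/n + 1) D edges, so r colour classes
  cannot cover the M > r (N/n + 1) D edges of G.\<close>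

definition pairs :: "'a set \<Rightarrow> 'a set set" where
  "pairs V = {e. e \<subseteq> V \<and> card e = 2}"

lemma finite_pairs: "finite V \<Longrightarrow> finite (pairs V)"
  unfolding pairs_def by (rule finite_subset[of _ "Pow V"]) auto

lemma card_pairs: "finite V \<Longrightarrow> card (pairs V) = card V choose 2"
  unfolding pairs_def by (rule n_subsets)

section \<open>Depth-first search\<close>

definition path_in :: "'a set set \<Rightarrow> 'a list \<Rightarrow> bool" where
  "path_in H u \<longleftrightarrow> distinct u \<and> (\<forall>i. Suc i < length u \<longrightarrow> {u!i, u!Suc i} \<in> H)"

lemma path_in_snoc:
  assumes "path_in H u" "u \<noteq> []" "y \<notin> set u" "{last u, y} \<in> H"
  shows "path_in H (u @ [y])"
  unfolding path_in_def
proof (intro conjI allI impI)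
  show "distinct (u @ [y])" using assms(1,3) by (simp add: path_in_def)
next
  fix i assume i: "Suc i < length (u @ [y])"
  show "{(u @ [y]) ! i, (u @ [y]) ! Suc i} \<in> H"
  proof (cases "Suc i < length u")
    case True then show ?thesis using assms(1) by (simp add: path_in_def nth_append)
  next
    case False
    then have "i = length u - 1" using i by simp
    then show ?thesis using assms(2,4) by (simp add: nth_append last_conv_nth)
  qed
qed

lemma path_in_butlast: "path_in H u \<Longrightarrow> path_in H (butlast u)"
  unfolding path_in_def by (auto simp: nth_butlast distinct_butlast)

text \<open>A state of depth-first search on the vertex set V: S holds the finished vertices, u is the
  stack (always a path of H) and T the unvisited vertices.\<close>
definition dfs_state :: "'a set set \<Rightarrow> 'a set \<Rightarrow> 'a set \<Rightarrow> 'a list \<Rightarrow> 'a set \<Rightarrow> bool" where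
  "dfs_state H V S u T \<longleftrightarrow> S \<inter> set u = {} \<and> S \<inter> T = {} \<and> set u \<inter> T = {} \<and>
     S \<union> set u \<union> T = V \<and> path_in H u \<and> (\<forall>x\<in>S. \<forall>y\<in>T. {x,y} \<notin> H)"

lemma dfs_step:
  assumes V: "finite V" and st: "dfs_state H V S u T" and S: "card S < card V"
  shows "\<exists>S' u' T'. dfs_state H V S' u' T' \<and>
    (S' = S \<and> card T' < card T \<or> (\<exists>x. x \<notin> S \<and> S' = insert x S \<and> T' = T))"
proof -
  have T: "finite T" using st V unfolding dfs_state_def by (metis finite_Un)
  show ?thesis
  proof (cases "u = []")
    case True
    then have "T \<noteq> {}" using st S unfolding dfs_state_def by auto
    then obtain y where y: "y \<in> T" by blast
    have "dfs_state H V S [y] (T - {y})"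
      using st True y unfolding dfs_state_def path_in_def by auto
    then show ?thesis using card_Diff1_less[OF T y] by blast
  next
    case False
    show ?thesis
    proof (cases "\<exists>y\<in>T. {last u, y} \<in> H")
      case True
      then obtain y where y: "y \<in> T" "{last u, y} \<in> H" by blast
      then have "path_in H (u @ [y])"
        using st False by (intro path_in_snoc) (auto simp: dfs_state_def)
      then have "dfs_state H V S (u @ [y]) (T - {y})"
        using st y unfolding dfs_state_def by auto
      then show ?thesis using card_Diff1_less[OF T y(1)] by blast
    next
      case no_edge: False
      have u: "u = butlast u @ [last u]" using False by simp
      have "distinct u" using st unfolding dfs_state_def path_in_def by simp
      then have "last u \<notin> set (butlast u)" using u by (metis distinct_append disjoint_iff list.set_intros(1))
      moreover have "last u \<notin> S" using st False unfolding dfs_state_def by auto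
      moreover have "set u = insert (last u) (set (butlast u))" using u
        by (metis Un_insert_right empty_set list.simps(15) set_append sup_bot.right_neutral)
      ultimately have "dfs_state H V (insert (last u) S) (butlast u) T"
        using st no_edge path_in_butlast[of H u] unfolding dfs_state_def by auto
      then show ?thesis using \<open>last u \<notin> S\<close> by blast
    qed
  qed
qed

lemma dfs_reaches_card:
  assumes "finite V" "dfs_state H V S u T" "card S \<le> b" "b \<le> card V"
  shows "\<exists>S' u' T'. dfs_state H V S' u' T' \<and> card S' = b"
  using assms
proof (induction "card T + (card V - card S)" arbitrary: S u T rule: less_induct)
  case less
  show ?case
  proof (cases "card S = b")
    case True then show ?thesis using less.prems(2) by blast
  next
    case False
    then have "card S < card V" using less.prems(3,4) by simp
    then obtain S' u' T' where st: "dfs_state H V S' u' T'"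
      and "S' = S \<and> card T' < card T \<or> (\<exists>x. x \<notin> S \<and> S' = insert x S \<and> T' = T)"
      using dfs_step[OF less.prems(1,2)] by blast
    moreover have "finite S" using less.prems(1,2) unfolding dfs_state_def by (metis finite_Un)
    ultimately have "card S' \<le> b \<and> card T' + (card V - card S') < card T + (card V - card S)"
      using False less.prems(3,4) by auto
    then show ?thesis using less.hyps[OF _ less.prems(1) st] less.prems(4) by blast
  qed
qed

lemma dfs_separator:
  assumes "finite V" "b \<le> card V" "\<forall>u. path_in H u \<longrightarrow> length u < n"
  shows "\<exists>S U. S \<subseteq> V \<and> U \<subseteq> V \<and> card S = b \<and> card U < n \<and>
           (\<forall>x\<in>S. \<forall>y\<in>V. {x,y} \<in> H \<longrightarrow> y \<in> S \<union> U)"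
proof -
  have "dfs_state H V {} [] V" unfolding dfs_state_def path_in_def by simp
  moreover have "card {} \<le> b" by simp
  ultimately obtain S u T where st: "dfs_state H V S u T" and "card S = b"
    using dfs_reaches_card[OF assms(1) _ _ assms(2)] by blast
  moreover have "S \<subseteq> V" "set u \<subseteq> V" using st unfolding dfs_state_def by auto
  moreover have "card (set u) < n"
  proof -
    have "path_in H u" using st unfolding dfs_state_def by simp
    then show ?thesis using assms(3) card_length[of u] by (meson le_less_trans)
  qed
  moreover have "\<forall>x\<in>S. \<forall>y\<in>V. {x,y} \<in> H \<longrightarrow> y \<in> S \<union> set u"
    using st unfolding dfs_state_def by auto
  ultimately show ?thesis by blast
qed

text \<open>Peeling off b vertices at a time with dfs_separator: the edges at the peeled vertices lie
  in a set of fewer than b + n vertices.\<close>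
lemma card_edges_without_long_path:
  assumes W: "finite W" "H \<subseteq> pairs W" and b: "b \<ge> 1"
    and no_path: "\<forall>u. path_in H u \<longrightarrow> length u < n"
    and sparse: "\<forall>Y. Y \<subseteq> W \<longrightarrow> card Y < b + n \<longrightarrow> card {e\<in>H. e \<subseteq> Y} \<le> D"
  shows "V \<subseteq> W \<Longrightarrow> card {e\<in>H. e \<subseteq> V} \<le> (card V div b + 1) * D"
proof (induction "card V" arbitrary: V rule: less_induct)
  case less
  have V: "finite V" using less.prems W(1) finite_subset by blast
  have H: "finite H" using finite_subset[OF W(2) finite_pairs[OF W(1)]] .
  show ?case
  proof (cases "card V < b")
    case True
    then have "card {e\<in>H. e \<subseteq> V} \<le> D" using sparse less.prems by simp
    then show ?thesis by simp
  next
    case False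
    then obtain S U where SU: "S \<subseteq> V" "U \<subseteq> V" "card S = b" "card U < n"
      and closed: "\<forall>x\<in>S. \<forall>y\<in>V. {x,y} \<in> H \<longrightarrow> y \<in> S \<union> U"
      using dfs_separator[OF V _ no_path, of b] by auto
    have split: "{e\<in>H. e \<subseteq> V} \<subseteq> {e\<in>H. e \<subseteq> V - S} \<union> {e\<in>H. e \<subseteq> S \<union> U}"
    proof
      fix e assume e: "e \<in> {e\<in>H. e \<subseteq> V}"
      show "e \<in> {e\<in>H. e \<subseteq> V - S} \<union> {e\<in>H. e \<subseteq> S \<union> U}"
      proof (cases "e \<subseteq> V - S")
        case False
        then obtain x where x: "x \<in> e" "x \<in> S" using e by blast
        have "card e = 2" using e W(2) unfolding pairs_def by blast
        then obtain p q where "e = {p,q}" by (meson card_2_iff)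
        then obtain y where y: "e = {x,y}" using x(1) by (metis insert_commute insertE singletonD)
        have "y \<in> S \<union> U" using closed x(2) e y by auto
        then show ?thesis using e x(2) y by auto
      qed (use e in simp)
    qed
    have "card (S \<union> U) < b + n" using SU card_Un_le[of S U] by linarith
    then have SU_edges: "card {e\<in>H. e \<subseteq> S \<union> U} \<le> D"
      using sparse SU(1,2) less.prems by (meson le_sup_iff order_trans)
    have card_VS: "card (V - S) = card V - b" using SU V by (simp add: card_Diff_subset finite_subset)
    then have "card (V - S) < card V" using False b by simp
    then have "card {e\<in>H. e \<subseteq> V - S} \<le> (card (V - S) div b + 1) * D"
      using less.hyps[of "V - S"] less.prems by blast
    also have "card (V - S) div b + 1 = card V div b"
      using card_VS False b le_div_geq[of b "card V"] by simp
    finally have "card {e\<in>H. e \<subseteq> V - S} \<le> card V div b * D" .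
    moreover have "card {e\<in>H. e \<subseteq> V} \<le> card ({e\<in>H. e \<subseteq> V - S} \<union> {e\<in>H. e \<subseteq> S \<union> U})"
      by (rule card_mono[OF _ split]) (use H in simp)
    ultimately show ?thesis using SU_edges card_Un_le[of "{e\<in>H. e \<subseteq> V - S}" "{e\<in>H. e \<subseteq> S \<union> U}"]
      by simp
  qed
qed

lemma mono_path_if_long_path:
  assumes "path_in {e\<in>E. c e = i} u" "n \<le> length u"
  shows "mono_path E c n"
proof -
  have "inj_on (nth u) {..<n}" using assms unfolding path_in_def by (intro inj_on_nth) auto
  moreover have "\<forall>j. Suc j < n \<longrightarrow> {u!j, u!Suc j} \<in> E \<and> c {u!j, u!Suc j} = i"
    using assms unfolding path_in_def by auto
  ultimately show ?thesis unfolding mono_path_def by blast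
qed

lemma locally_sparse_arrows_path:
  assumes W: "finite W" "G \<subseteq> pairs W" and n: "n \<ge> 1"
    and sparse: "\<forall>Y. Y \<subseteq> W \<longrightarrow> card Y \<le> 2 * n \<longrightarrow> card {e\<in>G. e \<subseteq> Y} \<le> D"
    and many_edges: "r * ((card W div n + 1) * D) < card G"
  shows "arrows_path G n r"
  unfolding arrows_path_def
proof (intro allI impI)
  fix c :: "nat set \<Rightarrow> nat"
  assume c: "\<forall>e\<in>G. c e < r"
  show "mono_path G c n"
  proof (rule ccontr)
    assume no_mono: "\<not> mono_path G c n"
    define H where "H i = {e\<in>G. c e = i}" for i
    have "card (H i) \<le> (card W div n + 1) * D" for i
    proof -
      have "\<forall>u. path_in (H i) u \<longrightarrow> length u < n"
        using no_mono mono_path_if_long_path[of G c i] unfolding H_def by (meson not_le)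
      moreover have "\<forall>Y. Y \<subseteq> W \<longrightarrow> card Y < n + n \<longrightarrow> card {e\<in>H i. e \<subseteq> Y} \<le> D"
      proof (intro allI impI)
        fix Y assume "Y \<subseteq> W" "card Y < n + n"
        then have "card {e\<in>G. e \<subseteq> Y} \<le> D" using sparse by simp
        moreover have "card {e\<in>H i. e \<subseteq> Y} \<le> card {e\<in>G. e \<subseteq> Y}"
          using finite_subset[OF W(2) finite_pairs[OF W(1)]] unfolding H_def by (intro card_mono) auto
        ultimately show "card {e\<in>H i. e \<subseteq> Y} \<le> D" by linarith
      qed
      moreover have "H i \<subseteq> pairs W" "{e\<in>H i. e \<subseteq> W} = H i"
        using W(2) unfolding H_def pairs_def by auto
      ultimately show ?thesis
        using card_edges_without_long_path[OF W(1) _ n, of "H i" n D W] by simp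
    qed
    then have "(\<Sum>i<r. card (H i)) \<le> r * ((card W div n + 1) * D)"
      using sum_bounded_above[of "{..<r}" "\<lambda>i. card (H i)"] by simp
    moreover have "G = (\<Union>i<r. H i)" using c unfolding H_def by auto
    ultimately have "card G \<le> r * ((card W div n + 1) * D)"
      using card_UN_le[of "{..<r}" H] by simp
    then show False using many_edges by simp
  qed
qed

section \<open>Graphs without dense small vertex sets\<close>

lemma choose_diff_le_ratio_power:
  fixes K M t :: nat
  shows "t \<le> M \<Longrightarrow> M \<le> K \<Longrightarrow> real ((K - t) choose (M - t)) \<le> (real M / real K)^t * real (K choose M)"
proof (induction t)
  case 0 show ?case by simp
next
  case (Suc t)
  define K' where "K' = K - t"
  define M' where "M' = M - t"
  have M': "0 < M'" "M' \<le> K'" using Suc.prems by (simp_all add: M'_def K'_def)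
  have "real M' * real (K' choose M') = real K' * real ((K' - 1) choose (M' - 1))"
    using times_binomial_minus1_eq[OF M'(1), of K'] by (metis of_nat_mult)
  then have "real ((K' - 1) choose (M' - 1)) = real M' / real K' * real (K' choose M')"
    using M' by (simp add: field_simps)
  also have "\<dots> \<le> real M / real K * real (K' choose M')"
  proof (rule mult_right_mono)
    have "M * t \<le> K * t" using Suc.prems by simp
    then have "M' * K \<le> M * K'"
      unfolding M'_def K'_def by (simp add: algebra_simps diff_mult_distrib diff_le_mono2)
    then have "real M' * real K \<le> real M * real K'" by (metis of_nat_le_iff of_nat_mult)
    then show "real M' / real K' \<le> real M / real K" using M' Suc.prems by (simp add: divide_simps)
  qed simp
  also have "\<dots> \<le> real M / real K * ((real M / real K)^t * real (K choose M))"
    using Suc.IH Suc.prems unfolding K'_def M'_def by (intro mult_left_mono) simp_all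
  finally show ?case by (simp add: K'_def M'_def mult.assoc)
qed

lemma card_supersets_le:
  assumes "finite P" "F \<subseteq> P" "card F = t"
  shows "card {E. E \<subseteq> P \<and> card E = M \<and> F \<subseteq> E} \<le> (card P - t) choose (M - t)"
proof -
  have "card {E. E \<subseteq> P \<and> card E = M \<and> F \<subseteq> E} \<le> card {E'. E' \<subseteq> P - F \<and> card E' = M - t}"
  proof (rule card_inj_on_le[where f = "\<lambda>E. E - F"])
    show "inj_on (\<lambda>E. E - F) {E. E \<subseteq> P \<and> card E = M \<and> F \<subseteq> E}"
      by (rule inj_onI) auto
    show "(\<lambda>E. E - F) ` {E. E \<subseteq> P \<and> card E = M \<and> F \<subseteq> E} \<subseteq> {E'. E' \<subseteq> P - F \<and> card E' = M - t}"
      using assms by (auto simp: card_Diff_subset finite_subset)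
  qed (use assms(1) in simp)
  also have "\<dots> = (card P - t) choose (M - t)"
    using assms by (simp add: n_subsets card_Diff_subset finite_subset)
  finally show ?thesis .
qed

lemma power_div_fact_le_exp:
  fixes x :: real
  assumes "0 \<le> x"
  shows "x ^ k / fact k \<le> exp x"
proof -
  have "(\<lambda>n. x ^ n / fact n) sums exp x" using exp_converges[of x] by (simp add: field_simps)
  then show ?thesis
    using sum_le_suminf[of "\<lambda>n. x ^ n / fact n" "{k}"] assms by (simp add: sums_iff)
qed

lemma binomial_le_exp_power:
  "real (m choose k) \<le> exp (real k) * (real m / real k) ^ k"
proof (cases "k = 0")
  case False
  have "real (m choose k) * fact k \<le> real m ^ k"
    using binomial_fact_pow[of m k] by (metis of_nat_fact of_nat_le_iff of_nat_mult of_nat_power)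
  then have "real (m choose k) \<le> real m ^ k / fact k" by (simp add: field_simps)
  also have "\<dots> = real k ^ k / fact k * (real m / real k) ^ k"
    using False by (simp add: power_divide)
  also have "\<dots> \<le> exp (real k) * (real m / real k) ^ k"
    by (intro mult_right_mono power_div_fact_le_exp) simp_all
  finally show ?thesis .
qed simp

lemma first_moment_bound:
  fixes B A K M t :: nat
  assumes "t \<le> M" "M \<le> K"
    and small: "real B * (exp 1 * real A * real M / (real t * real K)) ^ t < 1"
  shows "B * (A choose t) * ((K - t) choose (M - t)) < K choose M"
proof -
  define X where "X = real (K choose M)"
  have "X > 0" using assms unfolding X_def by simp
  have "real (B * (A choose t) * ((K - t) choose (M - t)))
      \<le> real B * (exp (real t) * (real A / real t) ^ t) * ((real M / real K) ^ t * X)"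
    unfolding X_def using assms(1,2)
    by (simp only: of_nat_mult) (intro mult_mono binomial_le_exp_power choose_diff_le_ratio_power; simp)
  also have "\<dots> = real B * (exp 1 * real A * real M / (real t * real K)) ^ t * X"
    by (simp add: exp_of_nat_mult[symmetric] power_mult_distrib power_divide)
  also have "\<dots> < X" using small \<open>X > 0\<close> by simp
  finally show ?thesis unfolding X_def by linarith
qed

text \<open>Union bound: a graph with t edges inside some a-set Y contains one of the
  (a choose 2) choose t sets of t pairs of Y.\<close>
lemma card_dense_graphs_le:
  assumes V: "finite V"
  shows "card {E. E \<subseteq> pairs V \<and> card E = M \<and> (\<exists>Y\<subseteq>V. card Y = a \<and> t \<le> card {e\<in>E. e \<subseteq> Y})}
    \<le> (card V choose a) * ((a choose 2) choose t) * (((card V choose 2) - t) choose (M - t))"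
    (is "card ?dense \<le> _")
proof -
  define Ys where "Ys = {Y. Y \<subseteq> V \<and> card Y = a}"
  define Fs where "Fs Y = {F. F \<subseteq> pairs Y \<and> card F = t}" for Y :: "'a set"
  define Bad where "Bad F = {E. E \<subseteq> pairs V \<and> card E = M \<and> F \<subseteq> E}" for F :: "'a set set"
  have Y_fin: "finite Y" "card Y = a" if "Y \<in> Ys" for Y
    using that V finite_subset unfolding Ys_def by auto
  have Fs_fin: "finite (Fs Y)" if "finite Y" for Y
    using finite_pairs[OF that] unfolding Fs_def by simp
  have "?dense \<subseteq> (\<Union>Y\<in>Ys. \<Union>F\<in>Fs Y. Bad F)"
  proof
    fix E assume "E \<in> ?dense"
    then obtain Y where E: "E \<subseteq> pairs V" "card E = M" and Y: "Y \<subseteq> V" "card Y = a"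
      and "t \<le> card {e\<in>E. e \<subseteq> Y}" by blast
    then obtain F where F: "F \<subseteq> {e\<in>E. e \<subseteq> Y}" "card F = t"
      by (meson obtain_subset_with_card_n)
    have "F \<in> Fs Y" using F E(1) unfolding Fs_def pairs_def by auto
    moreover have "E \<in> Bad F" using E F(1) unfolding Bad_def by auto
    ultimately show "E \<in> (\<Union>Y\<in>Ys. \<Union>F\<in>Fs Y. Bad F)" using Y unfolding Ys_def by blast
  qed
  moreover have "(\<Union>Y\<in>Ys. \<Union>F\<in>Fs Y. Bad F) \<subseteq> Pow (pairs V)" unfolding Bad_def by blast
  then have "finite (\<Union>Y\<in>Ys. \<Union>F\<in>Fs Y. Bad F)" using finite_pairs[OF V] finite_subset by blast
  ultimately have "card ?dense \<le> card (\<Union>Y\<in>Ys. \<Union>F\<in>Fs Y. Bad F)" by (rule card_mono[rotated])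
  also have "\<dots> \<le> (\<Sum>Y\<in>Ys. card (\<Union>F\<in>Fs Y. Bad F))"
    by (rule card_UN_le) (simp add: Ys_def V)
  also have "\<dots> \<le> (\<Sum>Y\<in>Ys. \<Sum>F\<in>Fs Y. card (Bad F))"
    by (intro sum_mono card_UN_le Fs_fin Y_fin)
  also have "\<dots> \<le> (\<Sum>Y\<in>Ys. \<Sum>F\<in>Fs Y. ((card V choose 2) - t) choose (M - t))"
  proof (intro sum_mono)
    fix Y F assume "Y \<in> Ys" "F \<in> Fs Y"
    then have "F \<subseteq> pairs V" "card F = t" unfolding Ys_def Fs_def pairs_def by auto
    then show "card (Bad F) \<le> ((card V choose 2) - t) choose (M - t)"
      unfolding Bad_def using card_supersets_le[OF finite_pairs[OF V], of F t M] card_pairs[OF V] by simp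
  qed
  also have "\<dots> = (card V choose a) * ((a choose 2) choose t) * (((card V choose 2) - t) choose (M - t))"
  proof -
    have "card (Fs Y) = (a choose 2) choose t" if "Y \<in> Ys" for Y
      unfolding Fs_def using Y_fin[OF that] by (simp add: n_subsets finite_pairs card_pairs)
    moreover have "card Ys = card V choose a" unfolding Ys_def by (rule n_subsets[OF V])
    ultimately show ?thesis by simp
  qed
  finally show ?thesis .
qed

lemma exists_locally_sparse_graph:
  assumes V: "finite V" and a: "a \<le> card V" and t: "t \<le> M" and M: "M \<le> card V choose 2"
    and small: "real (card V choose a) * (exp 1 * real (a choose 2) * real M / (real t * real (card V choose 2))) ^ t < 1"
  shows "\<exists>E \<subseteq> pairs V. card E = M \<and> (\<forall>Y\<subseteq>V. card Y \<le> a \<longrightarrow> card {e\<in>E. e \<subseteq> Y} < t)"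
proof (rule ccontr)
  assume no_sparse: "\<not> ?thesis"
  have "\<exists>Y\<subseteq>V. card Y = a \<and> t \<le> card {e\<in>E. e \<subseteq> Y}" if E: "E \<subseteq> pairs V" "card E = M" for E
  proof -
    obtain Y0 where Y0: "Y0 \<subseteq> V" "card Y0 \<le> a" "t \<le> card {e\<in>E. e \<subseteq> Y0}"
      using no_sparse E by (auto simp: not_less)
    obtain Y where Y: "Y0 \<subseteq> Y" "Y \<subseteq> V" "card Y = a"
      using exists_subset_between[OF Y0(2) a Y0(1) V] by blast
    have "card {e\<in>E. e \<subseteq> Y0} \<le> card {e\<in>E. e \<subseteq> Y}"
      using Y(1) finite_subset[OF E(1) finite_pairs[OF V]] by (intro card_mono) auto
    then show ?thesis using Y Y0(3) by auto
  qed
  then have sub: "{E. E \<subseteq> pairs V \<and> card E = M}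
    \<subseteq> {E. E \<subseteq> pairs V \<and> card E = M \<and> (\<exists>Y\<subseteq>V. card Y = a \<and> t \<le> card {e\<in>E. e \<subseteq> Y})}"
    by blast
  have "(card V choose 2) choose M
      \<le> (card V choose a) * ((a choose 2) choose t) * (((card V choose 2) - t) choose (M - t))"
    using card_mono[OF _ sub] card_dense_graphs_le[OF V, of M a t] finite_pairs[OF V]
    by (simp add: n_subsets card_pairs V)
  then show False using first_moment_bound[OF t M small] by linarith
qed

section \<open>Numerical estimates\<close>

lemma ln_8_div_3_ge: "0.95 \<le> ln (8/3::real)"
proof -
  have "exp (0.95::real) * 1.05 \<le> exp 0.95 * exp 0.05"
    using exp_ge_add_one_self[of "0.05::real"] by (intro mult_left_mono) simp_all
  also have "\<dots> = exp 1" by (simp flip: exp_add)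
  also have "\<dots> < 2.72" using e_less_272 by simp
  finally have "exp (0.95::real) \<le> 8/3" by simp
  then show ?thesis by (metis ln_ge_iff zero_less_divide_iff zero_less_numeral)
qed

lemma ln_15_le: "ln (15::real) \<le> 3"
proof -
  have "(9/8::real) ^ 24 \<le> exp (1/8) ^ 24"
    by (intro power_mono) (use exp_ge_add_one_self[of "1/8::real"] in simp_all)
  also have "\<dots> = exp 3" by (simp flip: exp_of_nat_mult)
  finally have "15 \<le> exp (3::real)" by (rule order_trans[rotated]) (simp add: power_divide)
  then show ?thesis by (metis exp_gt_zero ln_exp ln_le_cancel_iff zero_less_numeral)
qed

lemma binomial_mult_le_power: "real ((c * k) choose k) \<le> (exp 1 * real c) ^ k"
proof (cases "k = 0")
  case False
  have "real ((c * k) choose k) \<le> exp (real k) * (real (c * k) / real k) ^ k"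
    by (rule binomial_le_exp_power)
  also have "\<dots> = (exp 1 * real c) ^ k"
    using False by (simp add: power_mult_distrib flip: exp_of_nat_mult)
  finally show ?thesis .
qed simp

lemma real_choose_two: "real (m choose 2) = real m * (real m - 1) / 2"
proof (cases m)
  case (Suc k)
  then have "2 * (m choose 2) = m * k" by (simp add: choose_two)
  then have "2 * real (m choose 2) = real m * real k" by (metis of_nat_mult of_nat_numeral)
  then show ?thesis using Suc by (simp add: field_simps)
qed simp

lemma pair_density_le:
  fixes r n M t :: nat
  assumes r: "r \<ge> 2" and n: "n \<ge> 1" and M: "M \<le> r * (30 * r + 1) * t"
  shows "exp 1 * real ((2 * n) choose 2) * real M \<le> 3/8 * real t * real ((30 * r * n) choose 2)"
proof -
  have "real M \<le> real (r * (30 * r + 1) * t)" using M by (simp only: of_nat_le_iff)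
  then have M': "real M \<le> real r * (30 * real r + 1) * real t" by (simp add: algebra_simps)
  have e: "exp 1 \<le> (2.72::real)" using e_less_272 by simp
  have A: "real ((2 * n) choose 2) = real n * (2 * real n - 1)" by (simp add: real_choose_two field_simps)
  have K: "real ((30 * r * n) choose 2) = 30 * real r * real n * (30 * real r * real n - 1) / 2"
    by (simp add: real_choose_two)
  have "exp 1 * real ((2 * n) choose 2) * real M
      \<le> 2.72 * real ((2 * n) choose 2) * (real r * (30 * real r + 1) * real t)"
    by (intro mult_mono M' e) simp_all
  also have "\<dots> = (real n * real r * real t) * (2.72 * (2 * real n - 1) * (30 * real r + 1))"
    unfolding A by (simp add: algebra_simps)
  also have "\<dots> \<le> (real n * real r * real t) * (45/8 * (30 * real r * real n - 1))"
  proof (intro mult_left_mono)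
    have "real r * real n \<ge> 2 * real n" using r n by (simp add: mult_right_mono)
    moreover have "2.72 * (2 * real n - 1) * (30 * real r + 1)
        = 816/5 * (real r * real n) + 136/25 * real n - 408/5 * real r - 68/25"
      "45/8 * (30 * real r * real n - 1) = 675/4 * (real r * real n) - 45/8"
      by (simp_all add: field_simps)
    ultimately show "2.72 * (2 * real n - 1) * (30 * real r + 1) \<le> 45/8 * (30 * real r * real n - 1)"
      using r n by linarith
  qed simp
  also have "\<dots> = 3/8 * real t * real ((30 * r * n) choose 2)"
    unfolding K by (simp add: algebra_simps)
  finally show ?thesis .
qed

text \<open>\<lambda> r is chosen to make (15 e r)^(2n) (3/8)^t < 1 for t > \<lambda> n: the first factor bounds
  the number of 2n-sets of vertices, the second the chance that one of them spans t edges.\<close>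
definition sparsity_exponent :: "nat \<Rightarrow> real" where
  "sparsity_exponent r = 2 * ln (15 * exp 1 * real r) / ln (8/3)"

lemma sparsity_exponent_nonneg: "r \<ge> 1 \<Longrightarrow> 0 \<le> sparsity_exponent r"
  unfolding sparsity_exponent_def using ln_8_div_3_ge exp_ge_add_one_self[of 1]
  by (intro divide_nonneg_pos mult_nonneg_nonneg ln_ge_zero) (simp_all add: mult_ge1_I)

lemma power_lt_one_if_gt_sparsity_exponent:
  assumes r: "r \<ge> 1" and t: "real t > sparsity_exponent r * real n"
  shows "(15 * exp 1 * real r) ^ (2 * n) * (3/8) ^ t < 1"
proof -
  define q where "q = 15 * exp 1 * real r"
  have q: "q > 0" using r unfolding q_def by simp
  have "ln (q ^ (2 * n)) = real n * (sparsity_exponent r * ln (8/3))"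
    using q ln_8_div_3_ge by (simp add: ln_realpow sparsity_exponent_def q_def)
  also have "\<dots> < real t * ln (8/3)"
    using t ln_8_div_3_ge by (simp add: mult.assoc[symmetric] mult.commute[of "real n"])
  also have "\<dots> = ln ((8/3) ^ t)" by (simp add: ln_realpow)
  finally have "q ^ (2 * n) < (8/3) ^ t" using q by simp
  then show ?thesis unfolding q_def by (simp add: power_divide field_simps)
qed

lemma ramsey_first_moment_condition:
  fixes r n t M :: nat
  assumes r: "r \<ge> 2" and n: "n \<ge> 1" and t: "real t > sparsity_exponent r * real n"
    and M: "M \<le> r * (30 * r + 1) * t"
  shows "real ((30 * r * n) choose (2 * n)) *
    (exp 1 * real ((2 * n) choose 2) * real M / (real t * real ((30 * r * n) choose 2))) ^ t < 1"
proof -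
  have "0 \<le> sparsity_exponent r * real n" using sparsity_exponent_nonneg[of r] r by simp
  then have "0 < t" using t by linarith
  moreover have "real ((30 * r * n) choose 2) > 0" using r n by simp
  ultimately have "exp 1 * real ((2 * n) choose 2) * real M / (real t * real ((30 * r * n) choose 2)) \<le> 3/8"
    using pair_density_le[OF r n M] by (simp add: pos_divide_le_eq mult_ac)
  moreover have "real ((30 * r * n) choose (2 * n)) \<le> (15 * exp 1 * real r) ^ (2 * n)"
    using binomial_mult_le_power[of "15 * r" "2 * n"] by (simp add: mult_ac)
  ultimately have "real ((30 * r * n) choose (2 * n)) *
      (exp 1 * real ((2 * n) choose 2) * real M / (real t * real ((30 * r * n) choose 2))) ^ t
      \<le> (15 * exp 1 * real r) ^ (2 * n) * (3/8) ^ t"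
    by (intro mult_mono power_mono) simp_all
  also have "\<dots> < 1" using r t by (intro power_lt_one_if_gt_sparsity_exponent) simp_all
  finally show ?thesis .
qed

section \<open>The size-Ramsey number of paths\<close>

lemma size_ramsey_path_le:
  fixes r n D :: nat
  assumes r: "r \<ge> 2" and n: "n \<ge> 1" and D: "sparsity_exponent r * real n \<le> real D"
    and M_le: "r * (30 * r + 1) * D + 1 \<le> (30 * r * n) choose 2"
  shows "size_ramsey_path n r \<le> r * (30 * r + 1) * D + 1"
proof -
  define N where "N = 30 * r * n"
  define M where "M = r * (30 * r + 1) * D + 1"
  define t where "t = D + 1"
  have t: "real t > sparsity_exponent r * real n" "M \<le> r * (30 * r + 1) * t"
    using r D unfolding t_def M_def by simp_all
  have "2 * n \<le> card {..<N}" "t \<le> M" "M \<le> card {..<N} choose 2"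
    using r M_le unfolding N_def M_def t_def by simp_all
  moreover have "real (card {..<N} choose (2 * n)) *
      (exp 1 * real ((2 * n) choose 2) * real M / (real t * real (card {..<N} choose 2))) ^ t < 1"
    using ramsey_first_moment_condition[OF r n t] unfolding N_def by simp
  ultimately obtain G where G: "G \<subseteq> pairs {..<N}" "card G = M"
    and sparse: "\<forall>Y\<subseteq>{..<N}. card Y \<le> 2 * n \<longrightarrow> card {e\<in>G. e \<subseteq> Y} < t"
    using exists_locally_sparse_graph[of "{..<N}" "2 * n" t M] by blast
  have "arrows_path G n r"
  proof (rule locally_sparse_arrows_path[OF _ G(1) n])
    show "\<forall>Y\<subseteq>{..<N}. card Y \<le> 2 * n \<longrightarrow> card {e\<in>G. e \<subseteq> Y} \<le> D"
      using sparse unfolding t_def by auto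
    show "r * ((card {..<N} div n + 1) * D) < card G"
      using n unfolding G(2) N_def M_def by (simp add: algebra_simps)
  qed simp
  moreover have "simple_graph G"
    using G(1) finite_subset[OF G(1) finite_pairs] unfolding simple_graph_def pairs_def by auto
  ultimately show ?thesis
    unfolding size_ramsey_path_def M_def[symmetric] using G(2) by (intro Least_le) blast
qed

lemma sparsity_exponent_bound:
  assumes r: "r \<ge> 2"
  shows "real r * (30 * real r + 1) * sparsity_exponent r \<le> 600 * ln (real r) * (real r)^2 - 10 * (real r)^2"
proof -
  define L where "L = ln (real r)"
  have "ln 2 \<le> L" unfolding L_def using r by simp
  then have "1/2 \<le> L" using ln2_ge_two_thirds by linarith
  have "ln (15 * exp 1 * real r) = ln 15 + 1 + L" unfolding L_def using r by (simp add: ln_mult)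
  then have lam_le: "sparsity_exponent r \<le> 2 * (4 + L) / 0.95"
    unfolding sparsity_exponent_def using ln_15_le ln_8_div_3_ge \<open>1/2 \<le> L\<close>
    by (intro frac_le) simp_all
  have coef_le: "real r * (30 * real r + 1) \<le> 30.5 * (real r)^2"
    using r by (simp add: power2_eq_square algebra_simps)
  have "real r * (30 * real r + 1) * sparsity_exponent r \<le> 30.5 * (real r)^2 * (2 * (4 + L) / 0.95)"
    by (rule mult_mono[OF coef_le lam_le]) (use r sparsity_exponent_nonneg[of r] in simp_all)
  also have "\<dots> = (real r)^2 * (30.5 * (2 * (4 + L) / 0.95))" by simp
  also have "\<dots> \<le> (real r)^2 * (600 * L - 10)"
    using \<open>1/2 \<le> L\<close> by (intro mult_left_mono) simp_all
  finally show ?thesis unfolding L_def by (simp add: algebra_simps)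
qed

lemma ramsey_edge_count_lt:
  fixes r n D :: nat
  assumes r: "r \<ge> 2" and n: "n \<ge> 4" and D: "real D \<le> sparsity_exponent r * real n + 1"
  shows "real (r * (30 * r + 1) * D + 1) < 600 * ln (real r) * (real r)^2 * real n"
proof -
  have "real (r * (30 * r + 1) * D + 1) = real r * (30 * real r + 1) * real D + 1"
    by (simp add: algebra_simps)
  also have "\<dots> \<le> real r * (30 * real r + 1) * (sparsity_exponent r * real n + 1) + 1"
    using D by (intro add_right_mono mult_left_mono) simp_all
  also have "\<dots> = real r * (30 * real r + 1) * sparsity_exponent r * real n + (30 * (real r)^2 + real r + 1)"
    by (simp add: algebra_simps power2_eq_square)
  also have "\<dots> \<le> (600 * ln (real r) * (real r)^2 - 10 * (real r)^2) * real n + (30 * (real r)^2 + real r + 1)"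
    using sparsity_exponent_bound[OF r] by (simp add: mult_right_mono)
  also have "\<dots> < 600 * ln (real r) * (real r)^2 * real n"
  proof -
    have "4 * (real r)^2 \<le> real n * (real r)^2" using n by (intro mult_right_mono) simp_all
    then have "40 * (real r)^2 \<le> 10 * (real r)^2 * real n" by simp
    moreover have "2 * real r \<le> (real r)^2" using r by (simp add: power2_eq_square mult_right_mono)
    moreover have "(600 * ln (real r) * (real r)^2 - 10 * (real r)^2) * real n + (30 * (real r)^2 + real r + 1)
        = 600 * ln (real r) * (real r)^2 * real n - (10 * (real r)^2 * real n - (30 * (real r)^2 + real r + 1))"
      by (simp add: algebra_simps)
    ultimately show ?thesis using r by linarith
  qed
  finally show ?thesis .
qed

lemma ramsey_bound_le_choose_two:
  fixes r n M :: nat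
  assumes r: "r \<ge> 2" and n: "n \<ge> 2 * r"
    and M: "real M < 600 * ln (real r) * (real r)^2 * real n"
  shows "M \<le> (30 * r * n) choose 2"
proof -
  have "4 * (real r)^2 \<le> 2 * real r * real n" using n r by (simp add: power2_eq_square mult_left_mono)
  moreover have "(real r)^2 \<ge> 4" using r power_mono[of 2 "real r" 2] by simp
  ultimately have N: "40 * (real r)^2 \<le> 30 * real r * real n - 1" by linarith
  have "600 * ln (real r) * (real r)^2 * real n \<le> 600 * real r * (real r)^2 * real n"
    using ln_le_minus_one[of "real r"] r by (simp add: mult_right_mono)
  also have "\<dots> = 30 * real r * real n * (40 * (real r)^2) / 2" by (simp add: power2_eq_square)
  also have "\<dots> \<le> 30 * real r * real n * (30 * real r * real n - 1) / 2"
    using N by (intro divide_right_mono mult_left_mono) simp_all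
  also have "\<dots> = real ((30 * r * n) choose 2)" by (simp add: real_choose_two)
  finally show ?thesis using M by simp
qed

theorem theorem1p2:
  fixes r :: nat
  assumes "r \<ge> 2"
  shows "\<exists>N::nat. \<forall>n\<ge>N.
           real (size_ramsey_path n r) < 600 * ln (real r) * (real r)^2 * real n"
proof (intro exI[of _ "max 4 (2 * r)"] allI impI)
  fix n :: nat
  assume "max 4 (2 * r) \<le> n"
  then have n: "n \<ge> 4" "n \<ge> 2 * r" by simp_all
  define D where "D = nat \<lceil>sparsity_exponent r * real n\<rceil>"
  have "0 \<le> sparsity_exponent r * real n" using assms sparsity_exponent_nonneg[of r] by simp
  then have D: "sparsity_exponent r * real n \<le> real D" "real D \<le> sparsity_exponent r * real n + 1"
    unfolding D_def by linarith+
  have bound: "real (r * (30 * r + 1) * D + 1) < 600 * ln (real r) * (real r)^2 * real n"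
    using ramsey_edge_count_lt[OF assms n(1) D(2)] .
  have "size_ramsey_path n r \<le> r * (30 * r + 1) * D + 1"
    using size_ramsey_path_le[OF assms _ D(1) ramsey_bound_le_choose_two[OF assms n(2) bound]] n by simp
  then have "real (size_ramsey_path n r) \<le> real (r * (30 * r + 1) * D + 1)" by (simp only: of_nat_le_iff)
  then show "real (size_ramsey_path n r) < 600 * ln (real r) * (real r)^2 * real n"
    using bound by linarith
qed

end
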